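(* Let $\nu\ge3$ be a square-free integer with $\nu\equiv2$ or $3\pmod 4$. Define $x_0=0$, $x_{n+1}=\sqrt{\nu+x_n}$, let $P_n$ be the minimal polynomial of $x_n$ and $C_n$ its constant term. Let $p$ be a rational prime dividing $C_n$ for some $n\ge1$, and let $n(p)$ be the least positive such $n$. Then the ideal $(p,x_{n(p)})$ of $\mathbb{Z}[x_{n(p)}]$ is proper.
   Context: Square roots are the positive real ones. *)

theory Defs
  imports Complex_Main "HOL-Computational_Algebra.Computational_Algebra"
begin

primrec xseq :: "int \<Rightarrow> nat \<Rightarrow> real" where
  "xseq \<nu> 0 = 0"
| "xseq \<nu> (Suc n) = sqrt (of_int \<nu> + xseq \<nu> n)"

definition is_min_poly :: "real \<Rightarrow> rat poly \<Rightarrow> bool" where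
  "is_min_poly x q \<longleftrightarrow> lead_coeff q = 1 \<and> poly (map_poly of_rat q) x = 0 \<and>
     (\<forall>r. r \<noteq> 0 \<and> poly (map_poly of_rat r) x = 0 \<longrightarrow> degree q \<le> degree r)"

definition min_poly :: "real \<Rightarrow> rat poly" where
  "min_poly x = (THE q. is_min_poly x q)"

definition Cterm :: "int \<Rightarrow> nat \<Rightarrow> rat" where
  "Cterm \<nu> n = coeff (min_poly (xseq \<nu> n)) 0"

definition int_dvd_rat :: "int \<Rightarrow> rat \<Rightarrow> bool" where
  "int_dvd_rat p c \<longleftrightarrow> (\<exists>k::int. c = of_int (p * k))"

definition Zadj :: "real \<Rightarrow> real set" where
  "Zadj x = {poly (map_poly of_int f) x | f :: int poly. True}"

definition ideal_px :: "int \<Rightarrow> real \<Rightarrow> real set" where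
  "ideal_px p x = {of_int p * a + x * b | a b. a \<in> Zadj x \<and> b \<in> Zadj x}"

end

theory Submission
  imports Defs
begin

text \<open>
  Each x_n is an algebraic integer, being a root of X^2 - \<nu> - x_(n-1), so by Gauss's lemma
  its minimal polynomial P has integer coefficients and divides, in Z[X], every integer
  polynomial vanishing at x_n. If 1 = p a(x_n) + x_n b(x_n) with a, b integer polynomials,
  then P divides p a + X b - 1, and comparing constant terms gives p | 1 as soon as p
  divides P(0).
\<close>

lemma map_poly_add:
  assumes "f 0 = 0" "\<And>a b. f (a + b) = f a + f b"
  shows "map_poly f (p + q) = map_poly f p + map_poly f q"
  by (intro poly_eqI) (simp add: assms coeff_map_poly)

lemma map_poly_mult:
  fixes f :: "'a::comm_semiring_0 \<Rightarrow> 'b::comm_semiring_0"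
  assumes "f 0 = 0" "\<And>a b. f (a + b) = f a + f b" "\<And>a b. f (a * b) = f a * f b"
  shows "map_poly f (p * q) = map_poly f p * map_poly f q"
  by (induction p) (simp_all add: assms map_poly_add map_poly_pCons map_poly_smult)

lemma map_poly_of_rat_of_int [simp]:
  "map_poly (of_rat :: rat \<Rightarrow> 'a::field_char_0) (map_poly of_int p) = map_poly of_int p"
  by (simp add: map_poly_map_poly o_def)

lemma map_poly_of_int_inject:
  "map_poly (of_int :: int \<Rightarrow> 'a::ring_char_0) p = map_poly of_int q \<longleftrightarrow> p = q"
  by (metis coeff_map_poly of_int_0 of_int_eq_iff poly_eqI)

lemma content_monic:
  fixes p :: "int poly"
  assumes "lead_coeff p = 1"
  shows "content p = 1"
  by (metis assms content_dvd_coeff is_unit_normalize normalize_content)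

lemma rat_poly_common_denominator:
  fixes r :: "rat poly"
  obtains d :: int and A where "d > 0" "map_poly of_int A = smult (of_int d) r"
proof (induction r arbitrary: thesis rule: pCons_induct)
  case 0
  show ?case by (rule "0"[of 1 0]) simp_all
next
  case (pCons a r)
  obtain d A where "d > 0" and A: "map_poly of_int A = smult (of_int d) r"
    using pCons.IH by blast
  obtain n m where "quotient_of a = (n, m)"
    by (cases "quotient_of a")
  hence "m > 0" and a: "a = of_int n / of_int m"
    using quotient_of_denom_pos quotient_of_div by blast+
  have "map_poly of_int (pCons (n * d) (smult m A)) = smult (of_int (d * m)) (pCons a r)"
    using \<open>m > 0\<close> by (simp add: map_poly_pCons map_poly_smult A a mult_ac)
  with \<open>d > 0\<close> \<open>m > 0\<close> show ?case
    by (intro pCons.prems[of "d * m"]) simp_all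
qed

lemma gauss_lemma_primitive_cofactor:
  fixes A G :: "int poly" and h :: "rat poly"
  assumes "content A = 1" and "map_poly of_int A * h = map_poly of_int G"
  obtains H where "h = map_poly of_int H"
proof -
  obtain d H where "d > 0" and H: "map_poly of_int H = smult (of_int d) h"
    using rat_poly_common_denominator by blast
  have "map_poly (of_int :: int \<Rightarrow> rat) (A * H) = map_poly of_int (smult d G)"
    using H assms(2) by (simp add: map_poly_mult map_poly_smult mult_ac)
  hence "A * H = smult d G"
    by (simp only: map_poly_of_int_inject)
  hence "content H = d * content G"
    using assms(1) \<open>d > 0\<close> by (metis content_mult content_smult mult_1 abs_of_pos normalize_int_def)
  have "coeff h i \<in> \<int>" for i
  proof -
    have "d dvd coeff H i"
      using content_dvd_coeff[of H i] \<open>content H = d * content G\<close> by (metis dvd_mult_left)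
    moreover have "of_int (coeff H i) = of_int d * coeff h i"
      using H by (metis coeff_map_poly coeff_smult of_int_0)
    ultimately have "coeff h i = of_int (coeff H i div d)"
      using \<open>d > 0\<close> by (elim dvdE) simp
    thus ?thesis by simp
  qed
  with intpolyE that show thesis by metis
qed

lemma monic_factor_of_monic_int_poly:
  fixes P R :: "rat poly" and Q :: "int poly"
  assumes "lead_coeff P = 1" and "lead_coeff Q = 1" and "P * R = map_poly of_int Q"
  obtains P' where "P = map_poly of_int P'"
proof -
  \<comment> \<open>Write R = c B with B primitive; then c P is integral by Gauss's lemma, and comparing
    leading coefficients shows 1/c = lead_coeff B.\<close>
  obtain e B0 where "e > 0" and B0: "map_poly of_int B0 = smult (of_int e) R"
    using rat_poly_common_denominator by blast
  obtain B where B: "B0 = smult (content B0) B" and "content B = 1"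
    by (rule content_decompose)
  define c :: rat where "c = of_int (content B0) / of_int e"
  have R: "R = smult c (map_poly of_int B)"
    using B0 \<open>e > 0\<close> unfolding c_def
    by (subst (asm) B) (auto simp: map_poly_smult poly_eq_iff coeff_map_poly field_simps)
  have "map_poly of_int B * smult c P = map_poly of_int Q"
    using assms(3) by (simp add: R mult_ac)
  then obtain A where A: "smult c P = map_poly of_int A"
    using gauss_lemma_primitive_cofactor[OF \<open>content B = 1\<close>] by metis
  have "lead_coeff (map_poly of_int Q :: rat poly) = 1"
    using assms(2) by (simp add: degree_map_poly coeff_map_poly)
  hence "lead_coeff R = 1"
    using assms(1,3) by (metis lead_coeff_mult mult_1)
  hence "of_int (lead_coeff B) * c = 1"
    by (auto simp: R degree_map_poly coeff_map_poly mult.commute split: if_splits)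
  hence "P = smult (of_int (lead_coeff B)) (smult c P)"
    by simp
  also have "\<dots> = map_poly of_int (smult (lead_coeff B) A)"
    by (simp add: A map_poly_smult)
  finally show thesis by (rule that)
qed

lemma is_min_poly_dvd:
  assumes "is_min_poly x P" and "poly (map_poly of_rat g) x = 0"
  shows "P dvd g"
proof -
  have "P \<noteq> 0" and P: "poly (map_poly of_rat P) x = 0"
    using assms(1) by (auto simp: is_min_poly_def)
  define r where "r = g mod P"
  obtain q where g: "g = q * P + r"
    using div_mult_mod_eq unfolding r_def by metis
  have root: "poly (map_poly of_rat r) x = 0"
    using assms(2) P by (simp add: g map_poly_add map_poly_mult of_rat_add of_rat_mult)
  have "r = 0"
  proof (rule ccontr)
    assume "r \<noteq> 0"
    hence "degree r < degree P"
      unfolding r_def using \<open>P \<noteq> 0\<close> degree_mod_less' by blast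
    moreover have "degree P \<le> degree r"
      using assms(1) root \<open>r \<noteq> 0\<close> by (auto simp: is_min_poly_def)
    ultimately show False by simp
  qed
  thus ?thesis by (simp add: g)
qed

lemma is_min_poly_unique:
  assumes "is_min_poly x P" and "is_min_poly x P'"
  shows "P = P'"
proof -
  have "P dvd P'"
    using assms by (intro is_min_poly_dvd) (auto simp: is_min_poly_def)
  then obtain k where k: "P' = P * k" ..
  have "P \<noteq> 0" "P' \<noteq> 0"
    using assms by (auto simp: is_min_poly_def)
  hence "k \<noteq> 0" "degree P' = degree P"
    using assms k by (auto simp: is_min_poly_def intro: antisym)
  hence "degree k = 0"
    using k \<open>P \<noteq> 0\<close> by (simp add: degree_mult_eq)
  moreover have "lead_coeff k = 1"
    using assms k by (simp add: is_min_poly_def lead_coeff_mult)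
  ultimately have "k = 1"
    by (metis degree_0_id one_pCons)
  with k show ?thesis by simp
qed

lemma is_min_poly_min_poly:
  assumes "r \<noteq> 0" and "poly (map_poly of_rat r) x = 0"
  shows "is_min_poly x (min_poly x)"
proof -
  let ?root = "\<lambda>r. r \<noteq> 0 \<and> poly (map_poly of_rat r) x = 0"
  obtain r0 where r0: "?root r0" and least: "\<And>r. ?root r \<Longrightarrow> degree r0 \<le> degree r"
    using ex_has_least_nat[of ?root r degree] assms by blast
  have min: "is_min_poly x (smult (1 / lead_coeff r0) r0)"
    using r0 least by (auto simp: is_min_poly_def map_poly_smult of_rat_mult)
  show ?thesis
    unfolding min_poly_def using min by (rule theI) (rule is_min_poly_unique[OF _ min])
qed

lemma min_poly_algebraic_int:
  fixes x :: real
  assumes "algebraic_int x"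
  obtains P where "min_poly x = map_poly of_int P" and "is_min_poly x (map_poly of_int P)"
proof -
  obtain Q where Q: "poly (map_poly of_int Q) x = 0" "lead_coeff Q = 1"
    using assms by (auto simp: algebraic_int_altdef_ipoly)
  have "map_poly (of_int :: int \<Rightarrow> rat) Q \<noteq> 0"
    using Q(2) by (auto simp: map_poly_eq_0_iff)
  moreover have root: "poly (map_poly of_rat (map_poly (of_int :: int \<Rightarrow> rat) Q)) x = 0"
    using Q(1) by simp
  ultimately have min: "is_min_poly x (min_poly x)"
    by (rule is_min_poly_min_poly)
  hence "min_poly x dvd map_poly of_int Q"
    using root by (rule is_min_poly_dvd)
  then obtain R where "min_poly x * R = map_poly of_int Q"
    by (metis dvdE)
  then obtain P where "min_poly x = map_poly of_int P"
    using monic_factor_of_monic_int_poly min Q(2) unfolding is_min_poly_def by metis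
  with min show thesis by (intro that) simp_all
qed

lemma is_min_poly_of_int_dvd:
  assumes "is_min_poly x (map_poly of_int P)" and "poly (map_poly of_int g) x = 0"
  shows "P dvd g"
proof -
  have "map_poly of_int P dvd (map_poly of_int g :: rat poly)"
    using assms by (intro is_min_poly_dvd) simp_all
  then obtain h :: "rat poly" where h: "map_poly of_int P * h = map_poly of_int g"
    by (metis dvdE)
  have "lead_coeff P = 1"
    using assms(1) by (simp add: is_min_poly_def degree_map_poly coeff_map_poly)
  then obtain H where "h = map_poly of_int H"
    using gauss_lemma_primitive_cofactor[OF content_monic h] by blast
  with h have "map_poly (of_int :: int \<Rightarrow> rat) (P * H) = map_poly of_int g"
    by (simp add: map_poly_mult)
  hence "g = P * H"
    by (simp only: map_poly_of_int_inject)
  thus ?thesis by simp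
qed

lemma ideal_px_neq_Zadj:
  fixes x :: real and p :: int
  assumes "algebraic_int x" and "\<not> p dvd 1" and "int_dvd_rat p (coeff (min_poly x) 0)"
  shows "ideal_px p x \<noteq> Zadj x"
proof
  assume "ideal_px p x = Zadj x"
  moreover have "1 \<in> Zadj x"
    unfolding Zadj_def by (intro CollectI exI[of _ 1]) simp
  ultimately obtain a b where ab:
      "1 = of_int p * poly (map_poly of_int a) x + x * poly (map_poly of_int b) x"
    unfolding ideal_px_def Zadj_def by blast
  obtain P where P: "min_poly x = map_poly of_int P" "is_min_poly x (map_poly of_int P)"
    using min_poly_algebraic_int[OF assms(1)] .
  define g where "g = [:-1:] + smult p a + pCons 0 b"
  have "poly (map_poly of_int g) x = 0"
    using ab by (simp add: g_def map_poly_add map_poly_smult map_poly_pCons)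
  then obtain h where "g = P * h"
    using is_min_poly_of_int_dvd[OF P(2)] by (metis dvdE)
  hence "coeff g 0 = coeff P 0 * coeff h 0"
    by (simp add: coeff_mult_0)
  moreover obtain k where "coeff P 0 = p * k"
    using assms(3) P(1) by (auto simp: int_dvd_rat_def coeff_map_poly simp flip: of_int_mult)
  ultimately have "1 = p * (coeff a 0 - k * coeff h 0)"
    by (simp add: g_def algebra_simps)
  with assms(2) show False
    by (metis dvd_triv_left)
qed

lemma xseq_nonneg: "\<nu> \<ge> 0 \<Longrightarrow> xseq \<nu> n \<ge> 0"
  by (induction n) simp_all

lemma algebraic_int_xseq:
  assumes "\<nu> \<ge> 0"
  shows "algebraic_int (xseq \<nu> n)"
proof (induction n)
  case 0
  show ?case by simp
next
  case (Suc n)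
  have "poly [:- of_int \<nu>, 0, 1:] (xseq \<nu> (Suc n)) = xseq \<nu> n"
    using assms xseq_nonneg[OF assms, of n] by (simp flip: power2_eq_square)
  with Suc.IH show ?case
    by (rule algebraic_int_root) (auto simp: coeff_pCons split: nat.splits)
qed

theorem lemma4p9:
  fixes \<nu> :: int and p :: nat
  assumes "\<nu> \<ge> 3" and "squarefree \<nu>" and "\<nu> mod 4 = 2 \<or> \<nu> mod 4 = 3"
    and "prime p"
    and "\<exists>n\<ge>1. int_dvd_rat (int p) (Cterm \<nu> n)"
  shows "ideal_px (int p) (xseq \<nu> (LEAST n. n \<ge> 1 \<and> int_dvd_rat (int p) (Cterm \<nu> n)))
           \<noteq> Zadj (xseq \<nu> (LEAST n. n \<ge> 1 \<and> int_dvd_rat (int p) (Cterm \<nu> n)))"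
proof -
  let ?n = "LEAST n. n \<ge> 1 \<and> int_dvd_rat (int p) (Cterm \<nu> n)"
  have "algebraic_int (xseq \<nu> ?n)"
    using assms(1) by (intro algebraic_int_xseq) simp
  moreover have "\<not> int p dvd 1"
    using prime_gt_1_nat[OF assms(4)] by simp
  moreover have "int_dvd_rat (int p) (coeff (min_poly (xseq \<nu> ?n)) 0)"
    using LeastI_ex[OF assms(5)] by (simp add: Cterm_def)
  ultimately show ?thesis
    by (rule ideal_px_neq_Zadj)
qed

end
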